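(* Let $H:\mathbb R\times\mathbb R\times\Omega\to\mathbb R$ satisfy (H1)–(H6) described in the context. Then for every $\omega\in\Omega$, $$\tilde A(\omega)=\inf_{v\in\mathbf{Lip}}\ \sup_{y\in\mathbb R}H(Dv,y,\omega)=\sup_{y\in\mathbb R}H(0,y,\omega)<\infty.$$
   Context: $\Omega$ is a set (a probability space) and $H:\mathbb R\times\mathbb R\times\Omega\to\mathbb R$, $(p,y,\omega)\mapsto H(p,y,\omega)$. (H1) $H$ is Lipschitz in $p$ uniformly in $(y,\omega)$. (H2) There are $c_0,C_0,\gamma>0$ with $-c_0|p+\gamma|\le H(p,y,\omega)\le C_0|p+\gamma|$. (H3) $\lim_{|p|\to\infty}\inf_{(y,\omega)}H(p,y,\omega)=+\infty$. (H4) There is a modulus $w$ with $|H(p,y,\omega)-H(p,x,\omega)|\le w(|x-y|(1+|p|))$. (H5) $p\mapsto H(p,y,\omega)$ is convex. (H6) $H(p,y,\omega)\ge H(0,y,\omega)$ for all $p,y,\omega$. $\mathbf{Lip}$ denotes the set of globally Lipschitz real functions on $\mathbb R$. The stochastic flux limiter is $\tilde A(\omega)=\inf\{\mu:\ \exists v\in\mathbf{Lip}$ with $H(Dv,y,\omega)\le\mu$ in $\mathbb R$ in the viscosity sense$\}$. *)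

theory Defs
  imports "HOL-Analysis.Analysis"
begin

definition Lip :: "(real \<Rightarrow> real) set" where
  "Lip = {v. \<exists>L. L-lipschitz_on UNIV v}"

text \<open>v is a viscosity subsolution of H(Dv,y,omega) <= mu in R
  (C^1 test functions touching from above).\<close>
definition visc_sub :: "(real \<Rightarrow> real \<Rightarrow> 'w \<Rightarrow> real) \<Rightarrow> 'w \<Rightarrow> real \<Rightarrow> (real \<Rightarrow> real) \<Rightarrow> bool" where
  "visc_sub H \<omega> \<mu> v \<longleftrightarrow> continuous_on UNIV v \<and>
     (\<forall>\<phi> \<phi>' y. (\<forall>x. (\<phi> has_real_derivative \<phi>' x) (at x)) \<and> continuous_on UNIV \<phi>' \<and>
        (\<exists>r>0. \<forall>x. \<bar>x - y\<bar> < r \<longrightarrow> v x - \<phi> x \<le> v y - \<phi> y)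
        \<longrightarrow> H (\<phi>' y) y \<omega> \<le> \<mu>)"

definition flux_limiter :: "(real \<Rightarrow> real \<Rightarrow> 'w \<Rightarrow> real) \<Rightarrow> 'w \<Rightarrow> ereal" where
  "flux_limiter H \<omega> = Inf (ereal ` {\<mu>. \<exists>v\<in>Lip. visc_sub H \<omega> \<mu> v})"

text \<open>sup over y of H(Dv(y),y,omega), with Dv taken at the points where
  the Lipschitz function v is differentiable.\<close>
definition sup_H_Dv :: "(real \<Rightarrow> real \<Rightarrow> 'w \<Rightarrow> real) \<Rightarrow> 'w \<Rightarrow> (real \<Rightarrow> real) \<Rightarrow> ereal" where
  "sup_H_Dv H \<omega> v = Sup {ereal (H d y \<omega>) | d y. (v has_real_derivative d) (at y)}"

end

theory Submission
  imports Defs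
begin

text \<open>
  Since H(p, y, omega) \<ge> H(0, y, omega), a Lipschitz v gives sup H(Dv, y, omega) \<ge> H(0, y', omega)
  at every point y' where v is differentiable. These points are dense, because a Lipschitz
  function of one variable is differentiable almost everywhere, and H(0, -, omega) is continuous
  by (H4); hence the supremum is at least sup_y H(0, y, omega), with equality for v = 0.
  Likewise a viscosity subsolution of H \<le> mu is touched from above by a quadratic at points
  arbitrarily close to any y, where the test gradient gives H(0, y', omega) \<le> mu; so mu bounds
  sup_y H(0, y, omega), which conversely is attained by the subsolution v = 0 and is finite by (H2).

  Outside the sets where the average
  slopes of f over small balls containing x drop below p and also exceed q, for rationals
  p < q, the bounded slopes of a Lipschitz f converge and f is differentiable. For a monotone
  continuous g such a set S is null: a Vitali family of balls with slope < p covering S, and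
  inside it a second one with slope > q, compared through the Lebesgue-Stieltjes measure of g,
  show that the outer measure of S is at most p / q times itself. A Lipschitz f becomes
  monotone after adding L x.
\<close>

section \<open>Lipschitz functions on the real line are differentiable almost everywhere\<close>

definition ball_slope :: "(real \<Rightarrow> real) \<Rightarrow> real \<Rightarrow> real \<Rightarrow> real" where
  "ball_slope f c r = (f (c + r) - f (c - r)) / (2 * r)"

text \<open>A pair (c, r) stands for the ball with centre c and radius r; along this filter the balls
  contain x and their radii tend to 0.\<close>

definition shrinking_balls :: "real \<Rightarrow> (real \<times> real) filter" where
  "shrinking_balls x = (INF \<delta>\<in>{0<..}. principal {(c, r). 0 < r \<and> r < \<delta> \<and> \<bar>x - c\<bar> < r})"

definition slope_oscillation_set :: "(real \<Rightarrow> real) \<Rightarrow> real \<Rightarrow> real \<Rightarrow> real set" where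
  "slope_oscillation_set f p q =
     {x. (\<exists>\<^sub>F z in shrinking_balls x. case_prod (ball_slope f) z < p) \<and>
         (\<exists>\<^sub>F z in shrinking_balls x. q < case_prod (ball_slope f) z)}"

lemma eventually_shrinking_balls:
  "eventually P (shrinking_balls x) \<longleftrightarrow> (\<exists>\<delta>>0. \<forall>c r. 0 < r \<and> r < \<delta> \<and> \<bar>x - c\<bar> < r \<longrightarrow> P (c, r))"
  unfolding shrinking_balls_def
proof (subst eventually_INF_base)
  show "\<exists>\<delta>\<in>{0<..}. principal {(c, r). 0 < r \<and> r < \<delta> \<and> \<bar>x - c\<bar> < r} \<le>
          inf (principal {(c, r). 0 < r \<and> r < a \<and> \<bar>x - c\<bar> < r})
              (principal {(c, r). 0 < r \<and> r < b \<and> \<bar>x - c\<bar> < r})"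
    if "a \<in> {0<..}" "b \<in> {0<..}" for a b :: real
    using that by (intro bexI[of _ "min a b"]) auto
qed (auto simp: eventually_principal)

lemma frequently_shrinking_balls:
  "frequently P (shrinking_balls x) \<longleftrightarrow> (\<forall>\<delta>>0. \<exists>c r. 0 < r \<and> r < \<delta> \<and> \<bar>x - c\<bar> < r \<and> P (c, r))"
  unfolding frequently_def eventually_shrinking_balls by blast

lemma shrinking_balls_neq_bot: "shrinking_balls x \<noteq> bot"
proof -
  have "frequently (\<lambda>_. True) (shrinking_balls x)"
    unfolding frequently_shrinking_balls
  proof (intro allI impI)
    show "\<exists>c r. 0 < r \<and> r < \<delta> \<and> \<bar>x - c\<bar> < r \<and> True" if "0 < \<delta>" for \<delta> :: real
      using that by (intro exI[of _ x] exI[of _ "\<delta> / 2"]) simp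
  qed
  then show ?thesis by (auto simp: frequently_def)
qed

lemma tendsto_of_no_rational_oscillation:
  fixes X :: "'a \<Rightarrow> real"
  assumes F: "F \<noteq> bot" and bdd: "eventually (\<lambda>z. \<bar>X z\<bar> \<le> B) F"
    and osc: "\<And>p q. p \<in> \<rat> \<Longrightarrow> q \<in> \<rat> \<Longrightarrow> p < q \<Longrightarrow>
                \<not> ((\<exists>\<^sub>F z in F. X z < p) \<and> (\<exists>\<^sub>F z in F. q < X z))"
  shows "\<exists>l. (X \<longlongrightarrow> l) F"
proof -
  let ?Y = "\<lambda>z. ereal (X z)"
  have "ereal (- B) \<le> Liminf F ?Y"
    by (rule Liminf_bounded) (use bdd in \<open>auto elim!: eventually_mono\<close>)
  moreover have "Limsup F ?Y \<le> ereal B"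
    by (rule Limsup_bounded) (use bdd in \<open>auto elim!: eventually_mono\<close>)
  moreover have le: "Liminf F ?Y \<le> Limsup F ?Y"
    by (rule Liminf_le_Limsup[OF F])
  ultimately obtain l u where l: "Liminf F ?Y = ereal l" and u: "Limsup F ?Y = ereal u"
    by (cases "Liminf F ?Y"; cases "Limsup F ?Y") auto
  have "\<not> l < u"
  proof
    assume "l < u"
    then obtain p q where pq: "p \<in> \<rat>" "q \<in> \<rat>" "l < p" "p < q" "q < u"
      by (meson Rats_dense_in_real)
    have "\<exists>\<^sub>F z in F. X z < p"
    proof (rule ccontr)
      assume "\<not> ?thesis"
      then have "ereal p \<le> Liminf F ?Y"
        by (intro Liminf_bounded) (auto simp: not_frequently not_less elim!: eventually_mono)
      then show False using l pq by simp
    qed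
    moreover have "\<exists>\<^sub>F z in F. q < X z"
    proof (rule ccontr)
      assume "\<not> ?thesis"
      then have "Limsup F ?Y \<le> ereal q"
        by (intro Limsup_bounded) (auto simp: not_frequently not_less elim!: eventually_mono)
      then show False using u pq by simp
    qed
    ultimately show False using osc pq by blast
  qed
  with le l u have "(?Y \<longlongrightarrow> ereal l) F"
    by (intro Liminf_eq_Limsup[OF F]) auto
  then show ?thesis by (auto simp: lim_ereal)
qed

lemma ball_slope_tendsto_chord_slope:
  assumes cont: "continuous_on UNIV f" and "a < b"
  shows "((\<lambda>\<eta>. ball_slope f ((a + b) / 2) ((b - a) / 2 + \<eta>)) \<longlongrightarrow> (f b - f a) / (b - a)) (at_right 0)"
proof -
  have ends: "(a + b) / 2 + ((b - a) / 2 + \<eta>) = b + \<eta>" "(a + b) / 2 - ((b - a) / 2 + \<eta>) = a - \<eta>"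
    "2 * ((b - a) / 2 + \<eta>) = b - a + 2 * \<eta>" for \<eta> :: real
    by (simp_all add: field_simps)
  have eq: "ball_slope f ((a + b) / 2) ((b - a) / 2 + \<eta>) = (f (b + \<eta>) - f (a - \<eta>)) / (b - a + 2 * \<eta>)"
    for \<eta> by (simp only: ball_slope_def ends)
  have "isCont f z" for z
    using cont by (simp add: continuous_on_eq_continuous_at)
  then have "((\<lambda>\<eta>. (f (b + \<eta>) - f (a - \<eta>)) / (b - a + 2 * \<eta>))
               \<longlongrightarrow> (f (b + 0) - f (a - 0)) / (b - a + 2 * 0)) (at_right 0)"
    using \<open>a < b\<close> by (intro tendsto_intros isCont_tendsto_compose[of _ f]) auto
  then show ?thesis unfolding eq by simp
qed

lemma has_real_derivative_of_ball_slope_tendsto: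
  assumes cont: "continuous_on UNIV f"
    and lim: "(case_prod (ball_slope f) \<longlongrightarrow> l) (shrinking_balls x)"
  shows "(f has_real_derivative l) (at x)"
  unfolding has_field_derivative_iff LIM_eq
proof (intro allI impI)
  fix \<epsilon> :: real assume "0 < \<epsilon>"
  then obtain \<delta> where "\<delta> > 0"
    and near: "\<And>c r. 0 < r \<Longrightarrow> r < \<delta> \<Longrightarrow> \<bar>x - c\<bar> < r \<Longrightarrow> \<bar>ball_slope f c r - l\<bar> < \<epsilon> / 2"
    using lim[unfolded tendsto_iff, rule_format, of "\<epsilon> / 2"]
    by (auto simp: eventually_shrinking_balls dist_real_def)
  show "\<exists>d>0. \<forall>y. y \<noteq> x \<and> norm (y - x) < d \<longrightarrow> norm ((f y - f x) / (y - x) - l) < \<epsilon>"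
  proof (intro exI[of _ \<delta>] conjI allI impI \<open>\<delta> > 0\<close>)
    fix y assume y: "y \<noteq> x \<and> norm (y - x) < \<delta>"
    define a b where "a = min x y" and "b = max x y"
    have ab: "a < b" "b - a < \<delta>"
      using y by (auto simp: a_def b_def)
    have "x = a \<or> x = b"
      by (simp add: a_def b_def min_def max_def)
    then have mid: "\<bar>x - (a + b) / 2\<bar> = (b - a) / 2"
      using ab(1) by (auto simp: abs_if field_simps)
    have chord: "(f y - f x) / (y - x) = (f b - f a) / (b - a)"
    proof (cases "x < y")
      case False
      then have "a = y" "b = x" using y by (auto simp: a_def b_def)
      then show ?thesis by (metis minus_diff_eq minus_divide_divide)
    qed (simp add: a_def b_def)
    \<comment> \<open>the chord over [a, b] is a limit of slopes over slightly larger balls, which contain x\<close>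
    have "eventually (\<lambda>\<eta>. \<bar>ball_slope f ((a + b) / 2) ((b - a) / 2 + \<eta>) - l\<bar> \<le> \<epsilon> / 2) (at_right 0)"
      unfolding eventually_at_right_field
    proof (intro exI[of _ "\<delta> - (b - a) / 2"] conjI allI impI)
      show "0 < \<delta> - (b - a) / 2" using ab by simp
      fix \<eta> :: real assume "0 < \<eta>" "\<eta> < \<delta> - (b - a) / 2"
      then show "\<bar>ball_slope f ((a + b) / 2) ((b - a) / 2 + \<eta>) - l\<bar> \<le> \<epsilon> / 2"
        using ab mid by (intro less_imp_le near; linarith)
    qed
    moreover have "((\<lambda>\<eta>. \<bar>ball_slope f ((a + b) / 2) ((b - a) / 2 + \<eta>) - l\<bar>)
                     \<longlongrightarrow> \<bar>(f b - f a) / (b - a) - l\<bar>) (at_right 0)"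
      by (intro tendsto_intros ball_slope_tendsto_chord_slope cont ab)
    ultimately have "\<bar>(f b - f a) / (b - a) - l\<bar> \<le> \<epsilon> / 2"
      by (intro tendsto_upperbound[OF _ _ trivial_limit_at_right_real])
    then show "norm ((f y - f x) / (y - x) - l) < \<epsilon>"
      using chord \<open>0 < \<epsilon>\<close> by simp
  qed
qed

lemma abs_ball_slope_le:
  assumes "L-lipschitz_on UNIV f" and "0 < r"
  shows "\<bar>ball_slope f c r\<bar> \<le> L"
proof -
  have "\<bar>f (c + r) - f (c - r)\<bar> \<le> L * (2 * r)"
    using lipschitz_onD[OF assms(1), of "c + r" "c - r"] assms(2) by (simp add: dist_real_def)
  then show ?thesis
    using assms(2) by (simp add: ball_slope_def abs_divide divide_le_eq)
qed

lemma differentiable_if_no_rational_slope_oscillation: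
  assumes lip: "L-lipschitz_on UNIV f"
    and osc: "\<And>p q. p \<in> \<rat> \<Longrightarrow> q \<in> \<rat> \<Longrightarrow> p < q \<Longrightarrow> x \<notin> slope_oscillation_set f p q"
  shows "f differentiable (at x)"
proof -
  have "eventually (\<lambda>z. \<bar>case_prod (ball_slope f) z\<bar> \<le> L) (shrinking_balls x)"
    unfolding eventually_shrinking_balls using abs_ball_slope_le[OF lip]
    by (auto intro!: exI[of _ 1])
  then obtain l where "(case_prod (ball_slope f) \<longlongrightarrow> l) (shrinking_balls x)"
    using tendsto_of_no_rational_oscillation[OF shrinking_balls_neq_bot] osc
    unfolding slope_oscillation_set_def by blast
  then have "(f has_real_derivative l) (at x)"
    by (intro has_real_derivative_of_ball_slope_tendsto lipschitz_on_continuous_on[OF lip])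
  then show ?thesis by (auto simp: real_differentiable_def)
qed

lemma ball_slope_nonneg: "mono g \<Longrightarrow> 0 < r \<Longrightarrow> 0 \<le> ball_slope g c r"
  unfolding ball_slope_def by (auto simp: mono_def intro!: divide_nonneg_pos)

lemma emeasure_interval_measure_ball:
  assumes mono: "mono g" and cont: "continuous_on UNIV g" and "0 < r"
  shows "emeasure (interval_measure g) (ball c r) = ennreal (ball_slope g c r) * emeasure lebesgue (ball c r)"
proof -
  let ?M = "interval_measure g"
  have le: "\<And>x y. x \<le> y \<Longrightarrow> g x \<le> g y" using mono by (simp add: mono_def)
  have "\<And>a. continuous (at_right a) g"
    using cont by (simp add: continuous_on_eq_continuous_at continuous_at_imp_continuous_at_within)
  then have "emeasure ?M {c - r<..c + r} = ennreal (g (c + r) - g (c - r))"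
    using \<open>0 < r\<close> by (intro emeasure_interval_measure_Ioc le) auto
  moreover have "emeasure ?M {c + r..c + r} = 0"
    using emeasure_interval_measure_Icc[OF order_refl le cont, of "c + r"] by simp
  moreover have "{c - r<..c + r} = ball c r \<union> {c + r..c + r}"
    using \<open>0 < r\<close> by (auto simp: ball_eq_greaterThanLessThan)
  then have "emeasure ?M {c - r<..c + r} = emeasure ?M (ball c r) + emeasure ?M {c + r..c + r}"
    by (simp add: plus_emeasure ball_eq_greaterThanLessThan)
  ultimately have "emeasure ?M (ball c r) = ennreal (g (c + r) - g (c - r))"
    by simp
  also have "\<dots> = ennreal (ball_slope g c r * (2 * r))"
    using \<open>0 < r\<close> by (simp add: ball_slope_def)
  also have "\<dots> = ennreal (ball_slope g c r) * ennreal (2 * r)"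
    using \<open>0 < r\<close> ball_slope_nonneg[OF mono \<open>0 < r\<close>] by (intro ennreal_mult) auto
  finally show ?thesis
    using \<open>0 < r\<close> by (simp add: ball_eq_greaterThanLessThan)
qed

lemma cmult_emeasure_disjoint_UN_le:
  fixes a b :: ennreal
  assumes "countable I" "disjoint_family_on B I"
    and "\<And>i. i \<in> I \<Longrightarrow> B i \<in> sets M" "\<And>i. i \<in> I \<Longrightarrow> B i \<in> sets N"
    and le: "\<And>i. i \<in> I \<Longrightarrow> a * emeasure M (B i) \<le> b * emeasure N (B i)"
  shows "a * emeasure M (\<Union>(B ` I)) \<le> b * emeasure N (\<Union>(B ` I))"
proof -
  have "a * emeasure M (\<Union>(B ` I)) = (\<integral>\<^sup>+i. a * emeasure M (B i) \<partial>count_space I)"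
    by (simp add: assms emeasure_UN_countable nn_integral_cmult)
  also have "\<dots> \<le> (\<integral>\<^sup>+i. b * emeasure N (B i) \<partial>count_space I)"
    by (intro nn_integral_mono) (simp add: le)
  also have "\<dots> = b * emeasure N (\<Union>(B ` I))"
    by (simp add: assms emeasure_UN_countable nn_integral_cmult)
  finally show ?thesis .
qed

lemma Vitali_disjoint_balls_in_open:
  fixes S U :: "'a::euclidean_space set"
  assumes U: "open U" "S \<subseteq> U"
    and fine: "\<And>x \<delta>. x \<in> S \<Longrightarrow> 0 < \<delta> \<Longrightarrow> \<exists>c r. r < \<delta> \<and> x \<in> ball c r \<and> P c r"
  obtains C where "countable C" "\<And>c r. (c, r) \<in> C \<Longrightarrow> P c r \<and> 0 < r \<and> ball c r \<subseteq> U"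
    "disjoint_family_on (case_prod ball) C" "negligible (S - \<Union>(case_prod ball ` C))"
proof -
  define K where "K = {(c, r). P c r \<and> 0 < r \<and> ball c r \<subseteq> U}"
  have "\<exists>i. i \<in> K \<and> x \<in> ball (fst i) (snd i) \<and> snd i < \<delta>" if "x \<in> S" "0 < \<delta>" for x \<delta>
  proof -
    obtain \<rho> where "0 < \<rho>" and \<rho>: "ball x \<rho> \<subseteq> U"
      using U \<open>x \<in> S\<close> open_contains_ball by blast
    then have "0 < min \<delta> (\<rho> / 2)"
      using \<open>0 < \<delta>\<close> by simp
    then obtain c r where cr: "r < min \<delta> (\<rho> / 2)" "x \<in> ball c r" "P c r"
      using fine[OF \<open>x \<in> S\<close>] by blast
    have "0 < r"
      using cr(2) by (simp add: order.strict_trans1[OF zero_le_dist])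
    have "ball c r \<subseteq> ball x \<rho>"
    proof
      fix z assume "z \<in> ball c r"
      then have "dist x c + dist c z < \<rho>"
        using cr by (simp add: dist_commute)
      then show "z \<in> ball x \<rho>"
        using dist_triangle[of x z c] by simp
    qed
    then have "(c, r) \<in> K"
      using \<rho> cr(3) \<open>0 < r\<close> by (simp add: K_def)
    then show ?thesis
      using cr by (intro exI[of _ "(c, r)"]) simp
  qed
  then obtain C where "countable C" "C \<subseteq> K"
    "pairwise (\<lambda>i j. disjnt (ball (fst i) (snd i)) (ball (fst j) (snd j))) C"
    "negligible (S - (\<Union>i\<in>C. ball (fst i) (snd i)))"
    by (rule Vitali_covering_theorem_balls[of S K fst snd]) blast
  moreover have "P c r \<and> 0 < r \<and> ball c r \<subseteq> U" if "(c, r) \<in> C" for c r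
    using \<open>C \<subseteq> K\<close> that by (auto simp: K_def)
  ultimately show thesis
    by (intro that) (auto simp: case_prod_unfold disjoint_family_on_def pairwise_def disjnt_def)
qed

lemma emeasure_interval_measure_UN_balls_le:
  assumes g: "mono g" "continuous_on UNIV g"
    and C: "countable C" "disjoint_family_on (case_prod ball) C"
    and slope: "\<And>c r. (c, r) \<in> C \<Longrightarrow> 0 < r \<and> ball_slope g c r \<le> p"
  shows "emeasure (interval_measure g) (\<Union>(case_prod ball ` C))
           \<le> ennreal p * emeasure lebesgue (\<Union>(case_prod ball ` C))"
proof -
  have "1 * emeasure (interval_measure g) (\<Union>(case_prod ball ` C))
          \<le> ennreal p * emeasure lebesgue (\<Union>(case_prod ball ` C))"
  proof (rule cmult_emeasure_disjoint_UN_le[OF C])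
    fix i assume "i \<in> C"
    then obtain c r where i: "i = (c, r)" and "0 < r" "ball_slope g c r \<le> p"
      using slope by (cases i) blast
    then show "1 * emeasure (interval_measure g) (case_prod ball i)
                 \<le> ennreal p * emeasure lebesgue (case_prod ball i)"
      by (simp add: emeasure_interval_measure_ball[OF g] mult_right_mono ennreal_leI)
  qed (auto simp: case_prod_unfold intro: fmeasurableD[OF lmeasurable_ball])
  then show ?thesis by simp
qed

lemma emeasure_interval_measure_UN_balls_ge:
  assumes g: "mono g" "continuous_on UNIV g"
    and C: "countable C" "disjoint_family_on (case_prod ball) C"
    and slope: "\<And>c r. (c, r) \<in> C \<Longrightarrow> 0 < r \<and> q \<le> ball_slope g c r"
  shows "ennreal q * emeasure lebesgue (\<Union>(case_prod ball ` C))
           \<le> emeasure (interval_measure g) (\<Union>(case_prod ball ` C))"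
proof -
  have "ennreal q * emeasure lebesgue (\<Union>(case_prod ball ` C))
          \<le> 1 * emeasure (interval_measure g) (\<Union>(case_prod ball ` C))"
  proof (rule cmult_emeasure_disjoint_UN_le[OF C])
    fix i assume "i \<in> C"
    then obtain c r where i: "i = (c, r)" and "0 < r" "q \<le> ball_slope g c r"
      using slope by (cases i) blast
    then show "ennreal q * emeasure lebesgue (case_prod ball i)
                 \<le> 1 * emeasure (interval_measure g) (case_prod ball i)"
      by (simp add: emeasure_interval_measure_ball[OF g] mult_right_mono ennreal_leI)
  qed (auto simp: case_prod_unfold intro: fmeasurableD[OF lmeasurable_ball])
  then show ?thesis by simp
qed

lemma lmeasurable_Un_negligible_diff:
  assumes "U \<in> lmeasurable" "negligible (S - U)"
  shows "U \<union> S \<in> lmeasurable" "measure lebesgue (U \<union> S) = measure lebesgue U"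
proof -
  have eq: "U \<union> S = U \<union> (S - U)" by blast
  show "U \<union> S \<in> lmeasurable"
    unfolding eq by (rule fmeasurable.Un[OF assms(1) negligible_imp_measurable[OF assms(2)]])
  show "measure lebesgue (U \<union> S) = measure lebesgue U"
    unfolding eq using assms by (intro measure_Un_null_set) (auto simp: negligible_iff_null_sets)
qed

lemma slope_oscillation_set_measure_contraction:
  assumes g: "mono g" "continuous_on UNIV g" and pq: "0 < p" "p < q"
    and S: "S \<subseteq> slope_oscillation_set g p q" and G: "open G" "S \<subseteq> G" "G \<in> lmeasurable"
  shows "\<exists>W\<in>lmeasurable. S \<subseteq> W \<and> measure lebesgue W \<le> p / q * measure lebesgue G"
proof -
  have fine: "\<exists>c r. r < \<delta> \<and> x \<in> ball c r \<and> R (ball_slope g c r)"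
    if osc: "\<exists>\<^sub>F z in shrinking_balls x. R (case_prod (ball_slope g) z)" and "0 < \<delta>" for x \<delta> R
  proof -
    obtain c r where "r < \<delta>" "\<bar>x - c\<bar> < r" "R (ball_slope g c r)"
      using osc \<open>0 < \<delta>\<close> by (auto simp: frequently_shrinking_balls)
    then show ?thesis
      by (intro exI[of _ c] exI[of _ r]) (simp add: dist_real_def abs_minus_commute)
  qed
  obtain C1 where C1: "countable C1" "\<And>c r. (c, r) \<in> C1 \<Longrightarrow> ball_slope g c r < p \<and> 0 < r \<and> ball c r \<subseteq> G"
    "disjoint_family_on (case_prod ball) C1" "negligible (S - \<Union>(case_prod ball ` C1))"
    using Vitali_disjoint_balls_in_open[OF G(1,2), of "\<lambda>c r. ball_slope g c r < p"]
      fine S by (force simp: slope_oscillation_set_def)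
  define U1 where "U1 = \<Union>(case_prod ball ` C1)"
  have "open U1" unfolding U1_def by auto
  obtain C2 where C2: "countable C2" "\<And>c r. (c, r) \<in> C2 \<Longrightarrow> q < ball_slope g c r \<and> 0 < r \<and> ball c r \<subseteq> U1"
    "disjoint_family_on (case_prod ball) C2" "negligible (S \<inter> U1 - \<Union>(case_prod ball ` C2))"
    using Vitali_disjoint_balls_in_open[OF \<open>open U1\<close>, of "S \<inter> U1" "\<lambda>c r. q < ball_slope g c r"]
      fine S by (force simp: slope_oscillation_set_def)
  define U2 where "U2 = \<Union>(case_prod ball ` C2)"
  have "U1 \<subseteq> G" "U2 \<subseteq> U1"
    using C1(2) C2(2) by (fastforce simp: U1_def U2_def)+
  have "ennreal q * emeasure lebesgue U2 \<le> emeasure (interval_measure g) U2"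
    unfolding U2_def using C2(2) by (intro emeasure_interval_measure_UN_balls_ge[OF g C2(1,3)]) force
  also have "\<dots> \<le> emeasure (interval_measure g) U1"
    using \<open>U2 \<subseteq> U1\<close> \<open>open U1\<close> by (simp add: emeasure_mono)
  also have "\<dots> \<le> ennreal p * emeasure lebesgue U1"
    unfolding U1_def using C1(2) by (intro emeasure_interval_measure_UN_balls_le[OF g C1(1,3)]) force
  also have "\<dots> \<le> ennreal p * emeasure lebesgue G"
    using \<open>U1 \<subseteq> G\<close> G(3) by (intro mult_left_mono emeasure_mono) auto
  finally have "ennreal q * emeasure lebesgue U2 \<le> ennreal p * emeasure lebesgue G" .
  moreover have "U2 \<in> lmeasurable"
    using \<open>U2 \<subseteq> U1\<close> \<open>U1 \<subseteq> G\<close> C2(1)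
    by (intro fmeasurableI2[OF G(3)]) (auto simp: U2_def case_prod_unfold intro: fmeasurableD)
  ultimately have "q * measure lebesgue U2 \<le> p * measure lebesgue G"
    using G(3) pq
    by (simp add: emeasure_eq_measure2 ennreal_mult'[symmetric] ennreal_mult''[symmetric] ennreal_le_iff)
  moreover have "negligible (S - U2)"
    using negligible_Un[OF C1(4)[folded U1_def] C2(4)[folded U2_def]]
    by (rule negligible_subset) blast
  ultimately show ?thesis
    using pq lmeasurable_Un_negligible_diff[OF \<open>U2 \<in> lmeasurable\<close>]
    by (intro bexI[of _ "U2 \<union> S"]) (auto simp: pos_le_divide_eq mult.commute)
qed

lemma lmeasurable_outer_open:
  assumes W: "W \<in> lmeasurable" and "0 < e"
  obtains T where "open T" "W \<subseteq> T" "T \<in> lmeasurable" "measure lebesgue T < measure lebesgue W + e"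
proof -
  obtain T where T: "open T" "W \<subseteq> T" "T - W \<in> lmeasurable" "emeasure lebesgue (T - W) < ennreal e"
    using sets_lebesgue_outer_open[OF fmeasurableD[OF W] \<open>0 < e\<close>] by blast
  have "T = W \<union> (T - W)" using T(2) by blast
  then have "T \<in> lmeasurable" "measure lebesgue T \<le> measure lebesgue W + measure lebesgue (T - W)"
    using fmeasurable.Un[OF W T(3)] measure_Un_le[OF fmeasurableD[OF W] fmeasurableD[OF T(3)]] by simp_all
  moreover have "measure lebesgue (T - W) < e"
    using T(3,4) \<open>0 < e\<close> by (simp add: emeasure_eq_measure2 ennreal_less_iff)
  ultimately show thesis
    using that T(1,2) by fastforce
qed

lemma Inf_measure_open_supersets_le:
  fixes S :: "'a::euclidean_space set"
  assumes W: "W \<in> lmeasurable" "S \<subseteq> W"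
  shows "Inf {measure lebesgue G | G. open G \<and> S \<subseteq> G \<and> G \<in> lmeasurable} \<le> measure lebesgue W"
proof (rule field_le_epsilon)
  fix e :: real assume "0 < e"
  then obtain T where T: "open T" "W \<subseteq> T" "T \<in> lmeasurable" "measure lebesgue T < measure lebesgue W + e"
    using lmeasurable_outer_open[OF W(1)] by blast
  then have "measure lebesgue T \<in> {measure lebesgue G | G. open G \<and> S \<subseteq> G \<and> G \<in> lmeasurable}"
    using W(2) by blast
  moreover have "bdd_below {measure lebesgue G | G. open G \<and> S \<subseteq> G \<and> G \<in> lmeasurable}"
    by (auto simp: bdd_below_def intro!: exI[of _ 0])
  ultimately show "Inf {measure lebesgue G | G. open G \<and> S \<subseteq> G \<and> G \<in> lmeasurable}
                     \<le> measure lebesgue W + e"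
    using T(4) by (meson cInf_lower less_imp_le order.trans)
qed

lemma negligible_if_outer_measure_contracts:
  fixes S :: "'a::euclidean_space set"
  assumes "bounded S" "0 < \<theta>" "\<theta> < 1"
    and contract: "\<And>G. open G \<Longrightarrow> S \<subseteq> G \<Longrightarrow> G \<in> lmeasurable \<Longrightarrow>
                     \<exists>W\<in>lmeasurable. S \<subseteq> W \<and> measure lebesgue W \<le> \<theta> * measure lebesgue G"
  shows "negligible S"
proof -
  define Ms where "Ms = {measure lebesgue G | G. open G \<and> S \<subseteq> G \<and> G \<in> lmeasurable}"
  obtain R where "S \<subseteq> ball 0 R"
    using \<open>bounded S\<close> bounded_subset_ballD by blast
  then have ne: "Ms \<noteq> {}"
    unfolding Ms_def by (auto intro!: exI[of _ "ball 0 R"])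
  have "Inf Ms / \<theta> \<le> m" if "m \<in> Ms" for m
  proof -
    obtain G where "open G" "S \<subseteq> G" "G \<in> lmeasurable" "m = measure lebesgue G"
      using \<open>m \<in> Ms\<close> unfolding Ms_def by blast
    then obtain W where W: "W \<in> lmeasurable" "S \<subseteq> W" "measure lebesgue W \<le> \<theta> * m"
      using contract by blast
    then have "Inf Ms \<le> \<theta> * m"
      using Inf_measure_open_supersets_le[OF W(1,2)] unfolding Ms_def by linarith
    then show ?thesis
      using \<open>0 < \<theta>\<close> by (simp add: divide_le_eq mult.commute)
  qed
  then have "Inf Ms / \<theta> \<le> Inf Ms"
    by (intro cInf_greatest[OF ne])
  then have "Inf Ms \<le> \<theta> * Inf Ms"
    using \<open>0 < \<theta>\<close> by (simp add: divide_le_eq mult.commute)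
  moreover have "0 \<le> Inf Ms"
    by (intro cInf_greatest[OF ne]) (auto simp: Ms_def)
  ultimately have "Inf Ms = 0"
    using \<open>\<theta> < 1\<close> by (simp add: mult_le_cancel_right1)
  show ?thesis
    unfolding negligible_outer
  proof (intro allI impI)
    fix e :: real assume "0 < e"
    then obtain m where "m \<in> Ms" "m < e"
      using cInf_lessD[OF ne] \<open>Inf Ms = 0\<close> by force
    then show "\<exists>T. S \<subseteq> T \<and> T \<in> lmeasurable \<and> measure lebesgue T < e"
      unfolding Ms_def by blast
  qed
qed

lemma negligible_slope_oscillation_set_mono:
  assumes g: "mono g" "continuous_on UNIV g" and "p < q"
  shows "negligible (slope_oscillation_set g p q)"
proof (cases "0 < p")
  case False
  have "\<not> (\<exists>\<^sub>F z in shrinking_balls x. case_prod (ball_slope g) z < p)" for x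
  proof
    assume "\<exists>\<^sub>F z in shrinking_balls x. case_prod (ball_slope g) z < p"
    then have "\<forall>\<delta>>0. \<exists>c r. 0 < r \<and> r < \<delta> \<and> \<bar>x - c\<bar> < r \<and> ball_slope g c r < p"
      by (simp add: frequently_shrinking_balls)
    then obtain c r where "0 < r" "ball_slope g c r < p"
      using zero_less_one by blast
    then show False
      using ball_slope_nonneg[OF g(1), of r c] False by linarith
  qed
  then show ?thesis
    by (simp add: slope_oscillation_set_def)
next
  case True
  have "negligible (slope_oscillation_set g p q \<inter> cbox a b)" for a b
  proof (rule negligible_if_outer_measure_contracts)
    show "bounded (slope_oscillation_set g p q \<inter> cbox a b)"
      by (simp add: bounded_Int)
    show "0 < p / q" "p / q < 1"
      using True \<open>p < q\<close> by simp_all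
    fix G assume "open G" "slope_oscillation_set g p q \<inter> cbox a b \<subseteq> G" "G \<in> lmeasurable"
    then show "\<exists>W\<in>lmeasurable. slope_oscillation_set g p q \<inter> cbox a b \<subseteq> W \<and>
                 measure lebesgue W \<le> p / q * measure lebesgue G"
      by (intro slope_oscillation_set_measure_contraction[OF g True \<open>p < q\<close>]) auto
  qed
  then show ?thesis
    by (subst negligible_on_intervals) blast
qed

lemma ball_slope_add_linear:
  "r \<noteq> 0 \<Longrightarrow> ball_slope (\<lambda>x. f x + L * x) c r = ball_slope f c r + L"
  unfolding ball_slope_def by (simp add: field_simps)

lemma slope_oscillation_set_subset_add_linear:
  "slope_oscillation_set f p q \<subseteq> slope_oscillation_set (\<lambda>x. f x + L * x) (p + L) (q + L)"
  unfolding slope_oscillation_set_def frequently_shrinking_balls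
  by (fastforce simp: ball_slope_add_linear)

lemma negligible_slope_oscillation_set:
  assumes lip: "L-lipschitz_on UNIV f" and "p < q"
  shows "negligible (slope_oscillation_set f p q)"
proof -
  define g where "g x = f x + L * x" for x
  have "mono g"
  proof
    fix x y :: real assume "x \<le> y"
    then have "f x - f y \<le> L * (y - x)"
      using lipschitz_onD[OF lip, of x y] by (simp add: dist_real_def abs_le_iff)
    then show "g x \<le> g y"
      by (simp add: g_def algebra_simps)
  qed
  moreover have "continuous_on UNIV g"
    unfolding g_def by (intro continuous_intros lipschitz_on_continuous_on[OF lip])
  ultimately have "negligible (slope_oscillation_set g (p + L) (q + L))"
    using \<open>p < q\<close> by (intro negligible_slope_oscillation_set_mono) simp_all
  then show ?thesis
    using slope_oscillation_set_subset_add_linear[of f p q L]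
    unfolding g_def by (rule negligible_subset)
qed

theorem lipschitz_differentiable_ae:
  fixes f :: "real \<Rightarrow> real"
  assumes lip: "L-lipschitz_on UNIV f"
  shows "negligible {x. \<not> f differentiable (at x)}"
proof -
  define I where "I = {(p :: real, q). p \<in> \<rat> \<and> q \<in> \<rat> \<and> p < q}"
  have "countable I"
    by (rule countable_subset[of _ "\<rat> \<times> \<rat>"]) (auto simp: I_def countable_rat)
  have "negligible (\<Union>(p, q)\<in>I. slope_oscillation_set f p q)"
  proof (rule negligible_countable_Union)
    show "countable ((\<lambda>(p, q). slope_oscillation_set f p q) ` I)"
      using \<open>countable I\<close> by simp
    fix T assume "T \<in> (\<lambda>(p, q). slope_oscillation_set f p q) ` I"
    then obtain p q where "p < q" "T = slope_oscillation_set f p q"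
      unfolding I_def by blast
    then show "negligible T"
      using negligible_slope_oscillation_set[OF lip] by simp
  qed
  moreover have "{x. \<not> f differentiable (at x)} \<subseteq> (\<Union>(p, q)\<in>I. slope_oscillation_set f p q)"
  proof
    fix x assume "x \<in> {x. \<not> f differentiable (at x)}"
    then obtain p q where "p \<in> \<rat>" "q \<in> \<rat>" "p < q" "x \<in> slope_oscillation_set f p q"
      using differentiable_if_no_rational_slope_oscillation[OF lip, of x] by blast
    then show "x \<in> (\<Union>(p, q)\<in>I. slope_oscillation_set f p q)"
      unfolding I_def by blast
  qed
  ultimately show ?thesis
    by (rule negligible_subset)
qed

lemma lipschitz_has_derivative_nearby:
  fixes f :: "real \<Rightarrow> real"
  assumes "L-lipschitz_on UNIV f" and "0 < r"
  obtains y' d where "\<bar>y' - y\<bar> < r" "(f has_real_derivative d) (at y')"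
proof -
  have "\<not> {y - r<..<y + r} \<subseteq> {x. \<not> f differentiable (at x)}"
  proof
    assume "{y - r<..<y + r} \<subseteq> {x. \<not> f differentiable (at x)}"
    then have "negligible {y - r<..<y + r}"
      by (rule negligible_subset[OF lipschitz_differentiable_ae[OF assms(1)]])
    moreover have "\<not> negligible {y - r<..<y + r}"
      using \<open>0 < r\<close> by (intro open_not_negligible) auto
    ultimately show False
      by blast
  qed
  then obtain y' where "y' \<in> {y - r<..<y + r}" and "f differentiable (at y')"
    by blast
  moreover from this have "\<bar>y' - y\<bar> < r"
    by (auto simp: abs_less_iff)
  ultimately show thesis
    using that by (auto simp: real_differentiable_def)
qed

section \<open>The flux limiter\<close>

lemma isCont_of_modulus:
  fixes h :: "real \<Rightarrow> real"
  assumes w: "(w \<longlongrightarrow> 0) (at_right 0)" and modulus: "\<And>y. \<bar>h y - h x\<bar> \<le> w \<bar>y - x\<bar>"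
  shows "isCont h x"
  unfolding continuous_at_eps_delta
proof (intro allI impI)
  fix e :: real assume "0 < e"
  then obtain d where "0 < d" and small: "\<And>t. 0 < t \<Longrightarrow> t < d \<Longrightarrow> \<bar>w t\<bar> < e"
    using w[unfolded tendsto_iff, rule_format, of e]
    by (auto simp: eventually_at_right_field dist_real_def)
  have "\<bar>h y - h x\<bar> < e" if "\<bar>y - x\<bar> < d" for y
  proof (cases "y = x")
    case False
    then show ?thesis
      using modulus[of y] small[of "\<bar>y - x\<bar>"] that by fastforce
  qed (use \<open>0 < e\<close> in simp)
  then show "\<exists>d>0. \<forall>y. dist y x < d \<longrightarrow> dist (h y) (h x) < e"
    using \<open>0 < d\<close> by (auto simp: dist_real_def)
qed

lemma ereal_le_if_le_at_nearby_points:
  fixes h :: "real \<Rightarrow> real"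
  assumes "isCont h y" and near: "\<And>r. 0 < r \<Longrightarrow> \<exists>y'. \<bar>y' - y\<bar> < r \<and> ereal (h y') \<le> c"
  shows "ereal (h y) \<le> c"
proof (cases c)
  case (real m)
  show ?thesis
  proof (rule ccontr)
    assume "\<not> ?thesis"
    then have "0 < h y - m" using real by simp
    then obtain d where "0 < d" and close: "\<And>y'. dist y' y < d \<Longrightarrow> dist (h y') (h y) < h y - m"
      using \<open>isCont h y\<close> unfolding continuous_at_eps_delta by blast
    obtain y' where "\<bar>y' - y\<bar> < d" "h y' \<le> m"
      using near[OF \<open>0 < d\<close>] real by auto
    then show False
      using close[of y'] by (simp add: dist_real_def)
  qed
next
  case MInf
  then show ?thesis using near[of 1] by auto
qed simp

lemma exists_touching_quadratic:
  fixes v :: "real \<Rightarrow> real"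
  assumes cont: "continuous_on UNIV v" and "0 < r"
  obtains y' K where "\<bar>y' - y\<bar> < r"
    "\<And>x. \<bar>x - y'\<bar> < r - \<bar>y' - y\<bar> \<Longrightarrow> v x - K * (x - y)\<^sup>2 \<le> v y' - K * (y' - y)\<^sup>2"
proof -
  \<comment> \<open>K makes v x - K (x - y)^2 smaller at y - r and y + r than at y, so it peaks strictly inside\<close>
  define K where "K = (max (v (y - r)) (v (y + r)) - v y) / r\<^sup>2 + 1"
  define h where "h x = v x - K * (x - y)\<^sup>2" for x
  have "continuous_on {y - r..y + r} h"
    unfolding h_def by (intro continuous_intros continuous_on_subset[OF cont]) auto
  then obtain y' where y': "y' \<in> {y - r..y + r}" and y'_max: "\<And>x. x \<in> {y - r..y + r} \<Longrightarrow> h x \<le> h y'"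
    using continuous_attains_sup[OF compact_Icc, of "y - r" "y + r" h] \<open>0 < r\<close> by auto
  have "K * r\<^sup>2 = max (v (y - r)) (v (y + r)) - v y + r\<^sup>2"
    using \<open>0 < r\<close> by (simp add: K_def field_simps)
  moreover have "0 < r\<^sup>2"
    using \<open>0 < r\<close> by simp
  moreover have "h (y - r) = v (y - r) - K * r\<^sup>2" "h (y + r) = v (y + r) - K * r\<^sup>2" "h y = v y"
    by (simp_all add: h_def)
  ultimately have "h (y - r) < h y" "h (y + r) < h y"
    using max.cobounded1[of "v (y - r)" "v (y + r)"] max.cobounded2[of "v (y - r)" "v (y + r)"]
    by linarith+
  moreover have "h y \<le> h y'"
    using y'_max \<open>0 < r\<close> by simp
  ultimately have "y' \<noteq> y - r" "y' \<noteq> y + r"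
    by auto
  then have "\<bar>y' - y\<bar> < r"
    using y' by (auto simp: abs_less_iff)
  moreover have "h x \<le> h y'" if "\<bar>x - y'\<bar> < r - \<bar>y' - y\<bar>" for x
    using that by (intro y'_max) (auto simp: abs_less_iff)
  ultimately show thesis
    using that unfolding h_def by blast
qed

lemma visc_sub_imp_H0_le_nearby:
  assumes vs: "visc_sub H \<omega> \<mu> v" and H0_le: "\<And>p y. H 0 y \<omega> \<le> H p y \<omega>" and "0 < r"
  shows "\<exists>y'. \<bar>y' - y\<bar> < r \<and> H 0 y' \<omega> \<le> \<mu>"
proof -
  have "continuous_on UNIV v"
    using vs by (simp add: visc_sub_def)
  obtain y' K where y': "\<bar>y' - y\<bar> < r"
    and touch: "\<And>x. \<bar>x - y'\<bar> < r - \<bar>y' - y\<bar> \<Longrightarrow> v x - K * (x - y)\<^sup>2 \<le> v y' - K * (y' - y)\<^sup>2"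
    using exists_touching_quadratic[where y = y, OF \<open>continuous_on UNIV v\<close> \<open>0 < r\<close>] by blast
  have "H ((\<lambda>x. 2 * K * (x - y)) y') y' \<omega> \<le> \<mu>"
  proof (rule vs[unfolded visc_sub_def, THEN conjunct2, rule_format], intro conjI)
    show "\<forall>x. ((\<lambda>x. K * (x - y)\<^sup>2) has_real_derivative 2 * K * (x - y)) (at x)"
      by (auto intro!: derivative_eq_intros)
    show "continuous_on UNIV (\<lambda>x. 2 * K * (x - y))"
      by (intro continuous_intros)
    show "\<exists>\<rho>>0. \<forall>x. \<bar>x - y'\<bar> < \<rho> \<longrightarrow> v x - K * (x - y)\<^sup>2 \<le> v y' - K * (y' - y)\<^sup>2"
    proof (intro exI[of _ "r - \<bar>y' - y\<bar>"] conjI allI impI)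
      show "0 < r - \<bar>y' - y\<bar>"
        using y' by simp
    qed (rule touch)
  qed
  then have "H 0 y' \<omega> \<le> \<mu>"
    by (rule order.trans[OF H0_le])
  then show ?thesis
    using y' by blast
qed

lemma visc_sub_const:
  assumes "\<And>y. H 0 y \<omega> \<le> \<mu>"
  shows "visc_sub H \<omega> \<mu> (\<lambda>_. c)"
  unfolding visc_sub_def
proof (intro conjI allI impI)
  fix \<phi> \<phi>' :: "real \<Rightarrow> real" and y :: real
  assume "(\<forall>x. (\<phi> has_real_derivative \<phi>' x) (at x)) \<and> continuous_on UNIV \<phi>' \<and>
    (\<exists>r>0. \<forall>x. \<bar>x - y\<bar> < r \<longrightarrow> c - \<phi> x \<le> c - \<phi> y)"
  then obtain r where "(\<phi> has_real_derivative \<phi>' y) (at y)" "0 < r" "\<forall>x. \<bar>y - x\<bar> < r \<longrightarrow> \<phi> y \<le> \<phi> x"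
    by (auto simp: abs_minus_commute)
  then have "\<phi>' y = 0"
    by (rule DERIV_local_min)
  then show "H (\<phi>' y) y \<omega> \<le> \<mu>"
    using assms by simp
qed simp

lemma const_in_Lip: "(\<lambda>_. c) \<in> Lip"
  unfolding Lip_def by (auto intro!: exI[of _ 0] simp: lipschitz_on_def)

lemma sup_H_Dv_const: "sup_H_Dv H \<omega> (\<lambda>_. c) = (SUP y. ereal (H 0 y \<omega>))"
proof -
  have "((\<lambda>_. c) has_real_derivative d) (at y) \<longleftrightarrow> d = 0" for d y
    using DERIV_const DERIV_unique by blast
  then show ?thesis
    unfolding sup_H_Dv_def by (simp add: image_def)
qed

lemma SUP_H0_le_sup_H_Dv:
  assumes "v \<in> Lip" and H0_le: "\<And>p y. H 0 y \<omega> \<le> H p y \<omega>" and cont: "\<And>y. isCont (\<lambda>y. H 0 y \<omega>) y"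
  shows "(SUP y. ereal (H 0 y \<omega>)) \<le> sup_H_Dv H \<omega> v"
proof (rule SUP_least)
  fix y
  obtain L where lip: "L-lipschitz_on UNIV v"
    using \<open>v \<in> Lip\<close> by (auto simp: Lip_def)
  show "ereal (H 0 y \<omega>) \<le> sup_H_Dv H \<omega> v"
  proof (rule ereal_le_if_le_at_nearby_points[OF cont])
    fix r :: real assume "0 < r"
    then obtain y' d where y': "\<bar>y' - y\<bar> < r" and "(v has_real_derivative d) (at y')"
      by (rule lipschitz_has_derivative_nearby[OF lip])
    then have "ereal (H d y' \<omega>) \<le> sup_H_Dv H \<omega> v"
      unfolding sup_H_Dv_def by (intro Sup_upper) blast
    then have "ereal (H 0 y' \<omega>) \<le> sup_H_Dv H \<omega> v"
      by (rule order.trans[rotated]) (simp add: H0_le)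
    then show "\<exists>y'. \<bar>y' - y\<bar> < r \<and> ereal (H 0 y' \<omega>) \<le> sup_H_Dv H \<omega> v"
      using y' by blast
  qed
qed

lemma INF_sup_H_Dv_eq_SUP_H0:
  assumes "\<And>p y. H 0 y \<omega> \<le> H p y \<omega>" and "\<And>y. isCont (\<lambda>y. H 0 y \<omega>) y"
  shows "(INF v\<in>Lip. sup_H_Dv H \<omega> v) = (SUP y. ereal (H 0 y \<omega>))"
proof (rule antisym)
  show "(INF v\<in>Lip. sup_H_Dv H \<omega> v) \<le> (SUP y. ereal (H 0 y \<omega>))"
    using INF_lower[OF const_in_Lip, of "sup_H_Dv H \<omega>" 0] by (simp add: sup_H_Dv_const)
  show "(SUP y. ereal (H 0 y \<omega>)) \<le> (INF v\<in>Lip. sup_H_Dv H \<omega> v)"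
    using assms by (intro INF_greatest SUP_H0_le_sup_H_Dv)
qed

lemma flux_limiter_eq_SUP_H0:
  assumes H0_le: "\<And>p y. H 0 y \<omega> \<le> H p y \<omega>" and cont: "\<And>y. isCont (\<lambda>y. H 0 y \<omega>) y"
    and fin: "(SUP y. ereal (H 0 y \<omega>)) < \<infinity>"
  shows "flux_limiter H \<omega> = (SUP y. ereal (H 0 y \<omega>))"
proof (rule antisym)
  have "ereal (H 0 0 \<omega>) \<le> (SUP y. ereal (H 0 y \<omega>))"
    by (rule SUP_upper) simp
  then obtain s where s: "(SUP y. ereal (H 0 y \<omega>)) = ereal s"
    using fin by (cases "SUP y. ereal (H 0 y \<omega>)") auto
  then have "H 0 y \<omega> \<le> s" for y
    by (metis SUP_upper UNIV_I ereal_less_eq(3))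
  then have "visc_sub H \<omega> s (\<lambda>_. 0)"
    by (rule visc_sub_const)
  then show "flux_limiter H \<omega> \<le> (SUP y. ereal (H 0 y \<omega>))"
    unfolding flux_limiter_def s using const_in_Lip by (intro Inf_lower) blast
next
  show "(SUP y. ereal (H 0 y \<omega>)) \<le> flux_limiter H \<omega>"
    unfolding flux_limiter_def
  proof (intro Inf_greatest SUP_least)
    fix z y assume "z \<in> ereal ` {\<mu>. \<exists>v\<in>Lip. visc_sub H \<omega> \<mu> v}"
    then obtain \<mu> v where z: "z = ereal \<mu>" and vs: "visc_sub H \<omega> \<mu> v"
      by blast
    have "ereal (H 0 y \<omega>) \<le> ereal \<mu>"
      by (rule ereal_le_if_le_at_nearby_points[OF cont])
        (use visc_sub_imp_H0_le_nearby[of H \<omega> \<mu> v, OF vs H0_le] in auto)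
    then show "ereal (H 0 y \<omega>) \<le> z"
      using z by simp
  qed
qed

theorem lemma4p1:
  fixes H :: "real \<Rightarrow> real \<Rightarrow> 'w \<Rightarrow> real"
  assumes H1: "\<exists>L. \<forall>p q y \<omega>. \<bar>H p y \<omega> - H q y \<omega>\<bar> \<le> L * \<bar>p - q\<bar>"
    and H2: "\<exists>c0 C0 \<gamma>. c0 > 0 \<and> C0 > 0 \<and> \<gamma> > 0 \<and>
               (\<forall>p y \<omega>. - c0 * \<bar>p + \<gamma>\<bar> \<le> H p y \<omega> \<and> H p y \<omega> \<le> C0 * \<bar>p + \<gamma>\<bar>)"
    and H3: "\<forall>M. \<exists>R. \<forall>p y \<omega>. \<bar>p\<bar> \<ge> R \<longrightarrow> H p y \<omega> \<ge> M"
    and H4: "\<exists>w :: real \<Rightarrow> real. w 0 = 0 \<and> (w \<longlongrightarrow> 0) (at_right 0) \<and>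
               (\<forall>p x y \<omega>. \<bar>H p y \<omega> - H p x \<omega>\<bar> \<le> w (\<bar>x - y\<bar> * (1 + \<bar>p\<bar>)))"
    and H5: "\<forall>y \<omega>. convex_on UNIV (\<lambda>p. H p y \<omega>)"
    and H6: "\<forall>p y \<omega>. H p y \<omega> \<ge> H 0 y \<omega>"
  shows "flux_limiter H \<omega> = (INF v\<in>Lip. sup_H_Dv H \<omega> v)
       \<and> (INF v\<in>Lip. sup_H_Dv H \<omega> v) = (SUP y. ereal (H 0 y \<omega>))
       \<and> (SUP y. ereal (H 0 y \<omega>)) < \<infinity>"
proof -
  have H0_le: "H 0 y \<omega> \<le> H p y \<omega>" for p y
    using H6 by blast
  obtain C0 \<gamma> where "\<And>y. H 0 y \<omega> \<le> C0 * \<bar>0 + \<gamma>\<bar>"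
    using H2 by blast
  then have "(SUP y. ereal (H 0 y \<omega>)) \<le> ereal (C0 * \<bar>\<gamma>\<bar>)"
    by (intro SUP_least) simp
  then have fin: "(SUP y. ereal (H 0 y \<omega>)) < \<infinity>"
    by (rule le_less_trans) simp
  obtain w :: "real \<Rightarrow> real" where w: "(w \<longlongrightarrow> 0) (at_right 0)"
    "\<forall>p x y \<omega>. \<bar>H p y \<omega> - H p x \<omega>\<bar> \<le> w (\<bar>x - y\<bar> * (1 + \<bar>p\<bar>))"
    using H4 by blast
  have "\<bar>H 0 y \<omega> - H 0 x \<omega>\<bar> \<le> w \<bar>y - x\<bar>" for x y
    using w(2)[rule_format, of 0 y \<omega> x] by (simp add: abs_minus_commute)
  then have cont: "isCont (\<lambda>y. H 0 y \<omega>) y" for y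
    by (rule isCont_of_modulus[OF w(1)])
  show ?thesis
    using INF_sup_H_Dv_eq_SUP_H0[of H \<omega>, OF H0_le cont]
      flux_limiter_eq_SUP_H0[of H \<omega>, OF H0_le cont fin] fin by simp
qed

end
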